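(* Let $\phi=\tilde p/p$ be a degree $(n,1)$ rational inner function as in the context and let $\alpha\in\mathbb{T}$. Then: (i) neither $\tilde p-\alpha p$ nor $\tilde p_1-\alpha p_2$ is divisible by $(z_1-\gamma)^2$ for any $\gamma\in\mathbb{T}$; (ii) $\overline{B_\alpha(\tau_k)}=\lambda_k$ for every $k=1,\dots,m$; (iii) if $L_k\subseteq\mathcal{C}_\alpha$, then there is a constant $C\neq0$ such that $\frac{\partial\phi}{\partial z_1}(\tau_k,z_2)=C$ for all $z_2\in\overline{\mathbb{D}}$ with $z_2\neq\lambda_k$.
   Context: $\mathbb{D}$ is the open unit disk, $\mathbb{T}$ the unit circle. Fix $n\ge1$. Let $p\in\mathbb{C}[z_1,z_2]$ have no zeros on $\mathbb{D}^2$, degree at most $n$ in $z_1$ and at most $1$ in $z_2$; write $p(z)=p_1(z_1)+z_2p_2(z_1)$. Set $\tilde p(z)=z_1^nz_2\overline{p(1/\bar z_1,1/\bar z_2)}=z_2\tilde p_1(z_1)+\tilde p_2(z_1)$ with $\tilde p_i(z)=z^n\overline{p_i(1/\bar z)}$. Assume $\tilde p$ has degree exactly $(n,1)$ and $p,\tilde p$ have no common factor, so $\phi=\tilde p/p$ is a degree $(n,1)$ rational inner function. The zeros of $p$ on $\mathbb{T}^2$ are distinct points $(\tau_1,\lambda_1),\dots,(\tau_m,\lambda_m)$. $B_\alpha$ is the rational function $\frac{\tilde p_1(z)-\alpha p_2(z)}{\alpha p_1(z)-\tilde p_2(z)}$ with common factors cancelled (it is a finite Blaschke product); $L_k=\{\tau_k\}\times\mathbb{T}$;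 $\mathcal{C}_\alpha=\{\zeta\in\mathbb{T}^2:\tilde p(\zeta)=\alpha p(\zeta)\}$. *)

theory Defs
  imports "HOL-Complex_Analysis.Complex_Analysis" "HOL-Computational_Algebra.Polynomial_Factorial" "HOL-Computational_Algebra.Field_as_Ring"
begin

text \<open>Reflection of a one-variable polynomial of degree at most n:
  refl_poly n q (z) = z^n * conj (q (1 / conj z)).\<close>
definition refl_poly :: "nat \<Rightarrow> complex poly \<Rightarrow> complex poly" where
  "refl_poly n q = (\<Sum>i\<le>n. monom (cnj (coeff q (n - i))) i)"

definition eval2 :: "complex poly \<Rightarrow> complex poly \<Rightarrow> complex \<Rightarrow> complex \<Rightarrow> complex" where
  "eval2 q1 q2 z1 z2 = poly q1 z1 + z2 * poly q2 z1"

definition Bal :: "complex poly \<Rightarrow> complex poly \<Rightarrow> complex poly \<Rightarrow> complex poly \<Rightarrow> complex \<Rightarrow> complex \<Rightarrow> complex" where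
  "Bal p1 p2 tp1 tp2 \<alpha> z =
     (let N = tp1 - smult \<alpha> p2; D = smult \<alpha> p1 - tp2; g = gcd N D
      in poly (N div g) z / poly (D div g) z)"

end

theory Submission
  imports Defs
begin

(* For z2 in the open disk the slice w \<mapsto> \<phi>(w, z2) maps the closed disk into itself: on the
  circle |tp(w, z2)| = |p2(w) + conj z2 p1(w)| \<le> |p1(w) + z2 p2(w)| because |p2| \<le> |p1| there.
  Let \<gamma> on the unit circle be a common zero of the numerator tp1 - \<alpha> p2 and the denominator
  \<alpha> p1 - tp2 of B_\<alpha>. Then tp - \<alpha> p = (w - \<gamma>) S(w, z2), and a boundary (Julia type) argument
  at \<gamma> shows that S(\<gamma>, z2) \<noteq> 0 and that conj \<alpha> \<gamma> S(\<gamma>, z2) / p(\<gamma>, z2) is real for every z2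
  in the disk. A quotient of two affine functions of z2 that is real on the disk is constant, so
  S(\<gamma>, z2) = C p(\<gamma>, z2) with C \<noteq> 0. This constant is the derivative in (iii), it determines
  B_\<alpha>(\<tau>_k) in (ii), and it excludes a double zero of tp1 - \<alpha> p2 in (i), since then the
  z2-coefficient of S(\<gamma>, z2) would vanish together with p2(\<gamma>). *)

lemma cmod_add_power2: "(cmod (x + y))\<^sup>2 = (cmod x)\<^sup>2 + (cmod y)\<^sup>2 + 2 * Re (x * cnj y)"
  unfolding cmod_power2 by (simp add: algebra_simps power2_eq_square)

lemma norm_add_gt_one:
  fixes \<alpha> X :: complex
  assumes "norm \<alpha> = 1" and "Re (cnj \<alpha> * X) > 0"
  shows "norm (\<alpha> + X) > 1"
proof -
  have "(cmod (\<alpha> + X))\<^sup>2 = 1 + (cmod X)\<^sup>2 + 2 * Re (cnj \<alpha> * X)"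
    using assms(1) unfolding cmod_add_power2 by (simp add: mult.commute)
  moreover have "(cmod X)\<^sup>2 \<ge> 0" by simp
  ultimately have "(cmod (\<alpha> + X))\<^sup>2 > 1"
    using assms(2) by linarith
  then show ?thesis by (metis norm_ge_zero not_le power_le_one)
qed

lemma norm_one_minus_small_lt_one:
  fixes u :: complex and t :: real
  assumes u: "Re u > 0" and t: "t > 0" "t * (cmod u)\<^sup>2 \<le> Re u"
  shows "norm (1 - t * u) < 1"
proof -
  have "(cmod (1 - t * u))\<^sup>2 = 1 - 2 * t * Re u + t * (t * (cmod u)\<^sup>2)"
    unfolding cmod_power2 by (simp add: power2_eq_square algebra_simps)
  also have "\<dots> \<le> 1 - t * Re u"
    using t by (simp add: mult_left_mono)
  also have "\<dots> < 1\<^sup>2" using t u by simp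
  finally show ?thesis by (rule power_less_imp_less_base) simp
qed

lemma boundary_contact_sign:
  fixes \<gamma> \<alpha> u :: complex and g :: "complex \<Rightarrow> complex" and k :: nat
  assumes \<gamma>: "norm \<gamma> = 1" and \<alpha>: "norm \<alpha> = 1" and cont: "isCont g 0"
    and bound: "\<And>w. norm (\<gamma> + w) < 1 \<Longrightarrow> norm (\<alpha> + w^k * g w) \<le> 1"
    and u: "Re u > 0"
  shows "Re (cnj \<alpha> * (-\<gamma>*u)^k * g 0) \<le> 0"
proof (rule ccontr)
  define h where "h t = Re (cnj \<alpha> * (-\<gamma>*u)^k * g ((-\<gamma>*u) * of_real t))" for t :: real
  assume "\<not> ?thesis"
  then have "h 0 > 0" by (simp add: h_def)
  moreover have "isCont h 0"
  proof -
    have "isCont (g \<circ> (\<lambda>t::real. (-\<gamma>*u) * of_real t)) 0"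
      using cont by (intro continuous_at_compose continuous_intros) simp
    then have "isCont (\<lambda>t::real. g ((-\<gamma>*u) * of_real t)) 0" by (simp add: o_def)
    then show ?thesis unfolding h_def by (intro isCont_Re isCont_mult continuous_const)
  qed
  ultimately have "\<forall>\<^sub>F t in at_right 0. h t > 0"
    by (metis filterlim_at_split isCont_def order_tendstoD(1))
  moreover have "\<forall>\<^sub>F t in at_right 0. t * (cmod u)\<^sup>2 < Re u"
    using u by (intro order_tendstoD(2)) (auto intro!: tendsto_eq_intros)
  moreover have "\<forall>\<^sub>F t in at_right (0::real). t > 0"
    by (simp add: eventually_at_right_less)
  ultimately obtain t where t: "h t > 0" "t * (cmod u)\<^sup>2 < Re u" "t > 0"
    by (metis (mono_tags, lifting) eventually_happens' eventually_conj trivial_limit_at_right_real)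
  define w where "w = (-\<gamma>*u) * of_real t"
  have "\<gamma> + w = \<gamma> * (1 - t * u)" by (simp add: w_def algebra_simps)
  then have "norm (\<gamma> + w) < 1"
    using norm_one_minus_small_lt_one[OF u t(3)] t(2) \<gamma> by (simp add: norm_mult)
  then have le: "norm (\<alpha> + w^k * g w) \<le> 1" by (rule bound)
  have "w^k = of_real (t^k) * (-\<gamma>*u)^k"
    unfolding w_def by (simp only: power_mult_distrib of_real_power mult.commute)
  define Y where "Y = cnj \<alpha> * (-\<gamma>*u)^k * g w"
  have "cnj \<alpha> * (w^k * g w) = of_real (t^k) * Y"
    using \<open>w^k = _\<close> by (simp add: Y_def)
  moreover have "h t = Re Y" by (simp add: h_def Y_def w_def)
  ultimately have "Re (cnj \<alpha> * (w^k * g w)) = t^k * h t" by simp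
  then have "Re (cnj \<alpha> * (w^k * g w)) > 0" using t by simp
  with le norm_add_gt_one[OF \<alpha>] show False by fastforce
qed

lemma real_if_Re_mult_right_half_plane_nonneg:
  fixes B :: complex
  assumes "\<And>u. Re u > 0 \<Longrightarrow> Re (B * u) \<ge> 0"
  shows "Im B = 0"
proof (rule ccontr)
  assume i: "Im B \<noteq> 0"
  define x where "x = (Re B + 1) / Im B"
  have "Re (B * (1 + \<i> * of_real x)) \<ge> 0" by (rule assms) simp
  moreover have "Re (B * (1 + \<i> * of_real x)) = -1"
    using i by (simp add: x_def field_simps)
  ultimately show False by simp
qed

lemma zero_if_Re_mult_power_right_half_plane_nonpos:
  fixes A :: complex and k :: nat
  assumes k: "k \<ge> 2" and h: "\<And>u. Re u > 0 \<Longrightarrow> Re (A * u^k) \<le> 0"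
  shows "A = 0"
proof -
  have kp: "real k \<ge> 2" using k by simp
  have cis_le: "Re A * cos (k * \<theta>) - Im A * sin (k * \<theta>) \<le> 0" if "\<bar>\<theta>\<bar> < pi/2" for \<theta> :: real
  proof -
    have "Re (cis \<theta>) > 0" using cos_gt_zero_pi[of \<theta>] that by simp
    from h[OF this] have "Re (A * cis (k * \<theta>)) \<le> 0" by (simp only: Complex.DeMoivre)
    then show ?thesis by simp
  qed
  have small: "pi / (2 * k) < pi/2" "2 * pi / (3 * k) < pi/2"
    using kp pi_gt_zero by (simp_all add: divide_less_eq field_simps)
  have "Re A * cos (pi/2) - Im A * sin (pi/2) \<le> 0"
    using cis_le[of "pi / (2 * k)"] small kp by simp
  moreover have "Re A * cos (-(pi/2)) - Im A * sin (-(pi/2)) \<le> 0"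
    using cis_le[of "- (pi / (2 * k))"] small kp by simp
  moreover have "Re A \<le> 0" using cis_le[of 0] by simp
  moreover have "Re A * cos (2*pi/3) - Im A * sin (2*pi/3) \<le> 0"
    using cis_le[of "2 * pi / (3 * k)"] small kp by simp
  ultimately show ?thesis by (simp add: cos_120 complex_eq_iff)
qed

text \<open>(a + b z) / (c + d z) real on the disk forces proportionality; the four sample points
  0, \<plusminus>1/2, \<i>/2 suffice.\<close>

lemma proportional_if_Im_mult_cnj_zero:
  fixes a b c d :: complex
  assumes c: "c \<noteq> 0" and real: "\<And>z. norm z < 1 \<Longrightarrow> Im ((a + b*z) * cnj (c + d*z)) = 0"
  shows "b * c = a * d"
proof -
  define P0 where "P0 = a * cnj c"
  define P1 where "P1 = b * cnj c + a * cnj d"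
  define P2 where "P2 = b * cnj d"
  define Q where "Q = b * cnj c - a * cnj d"
  have "(a + b*(1/2)) * cnj (c + d*(1/2)) = P0 + P1/2 + P2/4"
    "(a + b*(-1/2)) * cnj (c + d*(-1/2)) = P0 - P1/2 + P2/4"
    "(a + b*(\<i>/2)) * cnj (c + d*(\<i>/2)) = P0 + \<i>/2 * Q + P2/4"
    by (simp_all add: P0_def P1_def P2_def Q_def algebra_simps)
  moreover have "Im P0 = 0" using real[of 0] by (simp add: P0_def)
  ultimately have "Im P0 = 0" "Im P0 + Im P1/2 + Im P2/4 = 0" "Im P0 - Im P1/2 + Im P2/4 = 0"
    "Im P0 + Re Q/2 + Im P2/4 = 0"
    using real[of "1/2"] real[of "-1/2"] real[of "\<i>/2"] by (simp_all add: norm_divide)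
  then have "Im P0 = 0" "Im P1 = 0" "Re Q = 0" by linarith+
  then have A: "b * cnj c = cnj a * d" and B: "a * cnj c = cnj a * c"
    by (simp_all add: P0_def P1_def Q_def complex_eq_iff algebra_simps)
  have "(b * c - a * d) * cnj c = c * (b * cnj c) - d * (a * cnj c)" by (simp add: algebra_simps)
  also have "\<dots> = 0" using A B by (simp add: algebra_simps)
  finally show ?thesis using c by simp
qed

lemma norm_add_cnj_mult_le:
  fixes a b w :: complex
  assumes "cmod b \<le> cmod a" "cmod w \<le> 1"
  shows "cmod (b + cnj w * a) \<le> cmod (a + w * b)"
proof -
  have e: "Re (b * cnj (cnj w * a)) = Re (a * cnj (w * b))"
    by (simp add: algebra_simps)
  have "(cmod (a + w * b))\<^sup>2 - (cmod (b + cnj w * a))\<^sup>2 = ((cmod a)\<^sup>2 - (cmod b)\<^sup>2) * (1 - (cmod w)\<^sup>2)"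
    unfolding cmod_add_power2 e by (simp add: norm_mult power_mult_distrib algebra_simps)
  also have "\<dots> \<ge> 0"
    using assms by (intro mult_nonneg_nonneg) (auto intro: power_mono simp: power_le_one)
  finally show ?thesis by (simp add: power2_le_iff_abs_le)
qed

lemma infinite_unit_circle: "infinite (sphere (0::complex) 1)"
proof
  assume "finite (sphere (0::complex) 1)"
  moreover have "connected (sphere (0::complex) 1)" by (rule connected_sphere) auto
  ultimately have "sphere (0::complex) 1 = {} \<or> (\<exists>a. sphere (0::complex) 1 = {a})"
    using connected_finite_iff_sing by blast
  moreover have "1 \<in> sphere (0::complex) 1" "-1 \<in> sphere (0::complex) 1" by auto
  ultimately show False by (metis empty_iff singletonD one_neq_neg_one)
qed

lemma poly_holomorphic_on: "poly p holomorphic_on S"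
  unfolding holomorphic_on_def field_differentiable_def
  by (meson has_field_derivative_at_within poly_DERIV)

lemma poly_refl_poly_unit_circle:
  assumes "degree q \<le> n" "norm z = 1"
  shows "poly (refl_poly n q) z = z^n * cnj (poly q z)"
proof -
  have z0: "z \<noteq> 0" using assms by auto
  have cz: "cnj z = inverse z"
    using assms(2) complex_norm_square[of z] by (simp add: inverse_unique)
  have "poly (refl_poly n q) z = (\<Sum>i\<le>n. cnj (coeff q (n - i)) * z^i)"
    by (simp add: refl_poly_def poly_sum poly_monom)
  also have "\<dots> = (\<Sum>j\<le>n. cnj (coeff q j) * z^(n-j))"
    by (rule sum.reindex_bij_witness[of _ "\<lambda>j. n - j" "\<lambda>j. n - j"]) auto
  also have "\<dots> = (\<Sum>j\<le>n. z^n * (cnj (coeff q j) * cnj z ^ j))"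
  proof (rule sum.cong[OF refl])
    fix j assume "j \<in> {..n}"
    then have "z^n = z^(n-j) * z^j" by (simp add: power_add[symmetric])
    then show "cnj (coeff q j) * z^(n-j) = z^n * (cnj (coeff q j) * cnj z ^ j)"
      using z0 by (simp add: cz power_inverse field_simps)
  qed
  also have "\<dots> = z^n * cnj (poly (\<Sum>j\<le>n. monom (coeff q j) j) z)"
    by (simp add: poly_sum poly_monom sum_distrib_left)
  also have "\<dots> = z^n * cnj (poly q z)"
    by (simp only: poly_as_sum_of_monoms'[OF assms(1)])
  finally show ?thesis .
qed

lemma poly_div_gcd_quotient:
  fixes N D N1 D1 :: "'a::field_gcd poly"
  assumes ND: "N * D1 = D * N1" and N: "N \<noteq> 0" and N1: "poly N1 t \<noteq> 0"
    and D1: "poly D1 t = l * poly N1 t" and l: "l \<noteq> 0"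
  shows "poly (N div gcd N D) t / poly (D div gcd N D) t = 1 / l"
proof -
  define g where "g = gcd N D"
  define N' where "N' = N div g"
  define D' where "D' = D div g"
  have g0: "g \<noteq> 0" using N by (simp add: g_def)
  have "g * (N' * D1) = g * (D' * N1)"
    using ND by (simp add: N'_def D'_def g_def algebra_simps)
  then have e: "N' * D1 = D' * N1" using g0 by simp
  have cop: "coprime N' D'" unfolding N'_def D'_def g_def by (rule div_gcd_coprime) (use N in simp)
  have "poly N' t * (l * poly N1 t) = poly D' t * poly N1 t"
    using arg_cong[OF e, of "\<lambda>q. poly q t"] D1 by simp
  then have Dl: "poly D' t = l * poly N' t" using N1 by (simp add: algebra_simps)
  have "poly N' t \<noteq> 0"
  proof
    assume N0: "poly N' t = 0"
    moreover have "poly D' t = 0" using Dl N0 by simp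
    ultimately have "[:-t,1:] dvd N'" "[:-t,1:] dvd D'" by (simp_all add: poly_eq_0_iff_dvd)
    then have "is_unit [:-t,1:]" using coprime_common_divisor[OF cop] by blast
    then show False by (auto simp: is_unit_poly_iff)
  qed
  then show ?thesis using Dl l unfolding N'_def D'_def g_def by (simp add: field_simps)
qed

locale rational_inner_n1 =
  fixes n :: nat and p1 p2 tp1 tp2 :: "complex poly" and \<alpha> :: complex
  assumes deg_p1: "degree p1 \<le> n" and deg_p2: "degree p2 \<le> n"
    and tp1_eq: "tp1 = refl_poly n p1" and tp2_eq: "tp2 = refl_poly n p2"
    and nonvanishing: "\<And>z1 z2. norm z1 < 1 \<Longrightarrow> norm z2 < 1 \<Longrightarrow> poly p1 z1 + z2 * poly p2 z1 \<noteq> 0"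
    and tp1_nonzero: "tp1 \<noteq> 0"
    and coprime_pairs: "coprime [:p1, p2:] [:tp2, tp1:]"
    and alpha_unimodular: "norm \<alpha> = 1"
begin

definition p_slice :: "complex \<Rightarrow> complex poly" where
  "p_slice z2 = p1 + smult z2 p2"

definition tp_slice :: "complex \<Rightarrow> complex poly" where
  "tp_slice z2 = tp2 + smult z2 tp1"

definition Bnum :: "complex poly" where
  "Bnum = tp1 - smult \<alpha> p2"

definition Bden :: "complex poly" where
  "Bden = smult \<alpha> p1 - tp2"

lemma poly_p_slice: "poly (p_slice z2) z = poly p1 z + z2 * poly p2 z"
  by (simp add: p_slice_def)

lemma poly_tp_slice: "poly (tp_slice z2) z = poly tp2 z + z2 * poly tp1 z"
  by (simp add: tp_slice_def)

lemma tp_slice_eq: "tp_slice z2 = smult \<alpha> (p_slice z2) + (smult z2 Bnum - Bden)"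
  by (simp add: tp_slice_def p_slice_def Bnum_def Bden_def smult_add_right smult_diff_right
      algebra_simps)

lemma Bal_eq: "Bal p1 p2 tp1 tp2 \<alpha> z = poly (Bnum div gcd Bnum Bden) z / poly (Bden div gcd Bnum Bden) z"
  by (simp add: Bal_def Bnum_def Bden_def Let_def)

lemma poly_tp1_unit_circle: "norm z = 1 \<Longrightarrow> poly tp1 z = z^n * cnj (poly p1 z)"
  unfolding tp1_eq by (rule poly_refl_poly_unit_circle[OF deg_p1])

lemma poly_tp2_unit_circle: "norm z = 1 \<Longrightarrow> poly tp2 z = z^n * cnj (poly p2 z)"
  unfolding tp2_eq by (rule poly_refl_poly_unit_circle[OF deg_p2])

lemma no_common_root_unit_circle:
  assumes \<gamma>: "norm \<gamma> = 1" and "poly p1 \<gamma> = 0" and "poly p2 \<gamma> = 0"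
  shows False
proof -
  let ?q = "[:-\<gamma>, 1:]"
  have "poly tp1 \<gamma> = 0" "poly tp2 \<gamma> = 0"
    using poly_tp1_unit_circle[OF \<gamma>] poly_tp2_unit_circle[OF \<gamma>] assms by auto
  with assms have d: "?q dvd p1" "?q dvd p2" "?q dvd tp1" "?q dvd tp2"
    by (simp_all add: poly_eq_0_iff_dvd)
  have pair_dvd: "[:?q:] dvd [:a, b:]" if "?q dvd a" "?q dvd b" for a b :: "complex poly"
    using that by (simp add: const_poly_dvd_iff coeff_pCons split: nat.splits)
  have "is_unit [:?q:]"
    by (rule coprime_common_divisor[OF coprime_pairs pair_dvd[OF d(1,2)] pair_dvd[OF d(4,3)]])
  then show False by (simp add: is_unit_poly_iff)
qed

lemma norm_p2_le_p1:
  assumes "norm z \<le> 1"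
  shows "norm (poly p2 z) \<le> norm (poly p1 z)"
proof -
  let ?S = "{z. norm (poly p2 z) \<le> norm (poly p1 z)}"
  have "ball 0 1 \<subseteq> ?S"
  proof
    fix z :: complex assume "z \<in> ball 0 1"
    then have z: "norm z < 1" by simp
    show "z \<in> ?S"
    proof (rule ccontr)
      assume "z \<notin> ?S"
      then have lt: "norm (poly p1 z) < norm (poly p2 z)" by simp
      then have nz: "poly p2 z \<noteq> 0" by auto
      define w where "w = - poly p1 z / poly p2 z"
      have "norm w < 1" using lt nz by (simp add: w_def norm_divide divide_less_eq)
      moreover have "poly p1 z + w * poly p2 z = 0" using nz by (simp add: w_def)
      ultimately show False using nonvanishing[OF z] by blast
    qed
  qed
  moreover have "closed ?S"
    by (intro closed_Collect_le continuous_intros)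
  ultimately have "closure (ball 0 1) \<subseteq> ?S"
    by (rule closure_minimal)
  then show ?thesis using assms by auto
qed

lemma p_slice_nonzero:
  assumes z1: "norm z1 \<le> 1" and z2: "norm z2 < 1"
  shows "poly (p_slice z2) z1 \<noteq> 0"
proof
  assume e: "poly (p_slice z2) z1 = 0"
  have le: "norm (poly p2 z1) \<le> norm (poly p1 z1)" by (rule norm_p2_le_p1[OF z1])
  have "norm (poly p1 z1) = norm z2 * norm (poly p2 z1)"
    using e unfolding poly_p_slice by (metis add_eq_0_iff norm_minus_cancel norm_mult)
  also have "\<dots> \<le> norm z2 * norm (poly p1 z1)" using le by (simp add: mult_left_mono)
  finally have p1_le: "norm (poly p1 z1) \<le> norm z2 * norm (poly p1 z1)" .
  have "poly p1 z1 = 0"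
  proof (rule ccontr)
    assume "poly p1 z1 \<noteq> 0"
    then have "norm z2 * norm (poly p1 z1) < 1 * norm (poly p1 z1)"
      using z2 by (intro mult_strict_right_mono) auto
    then show False using p1_le by simp
  qed
  moreover from this have "poly p2 z1 = 0" using le by simp
  moreover have "norm z1 = 1"
  proof (rule ccontr)
    assume "norm z1 \<noteq> 1"
    then have "norm z1 < 1" using z1 by simp
    then show False using nonvanishing[OF _ z2] e unfolding poly_p_slice by blast
  qed
  ultimately show False using no_common_root_unit_circle by blast
qed

lemma norm_tp_slice_le:
  assumes z1: "norm z1 < 1" and z2: "norm z2 < 1"
  shows "norm (poly (tp_slice z2) z1) \<le> norm (poly (p_slice z2) z1)"
proof -
  define f where "f z = poly (tp_slice z2) z / poly (p_slice z2) z" for z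
  have nz: "poly (p_slice z2) z \<noteq> 0" if "z \<in> cball 0 1" for z
    using p_slice_nonzero[OF _ z2] that by auto
  have "norm (f z1) \<le> 1"
  proof (rule maximum_modulus_frontier[where f=f and S="ball 0 1"])
    show "f holomorphic_on interior (ball 0 1)"
      unfolding f_def using nz by (intro holomorphic_intros poly_holomorphic_on) auto
    show "continuous_on (closure (ball 0 1)) f"
      unfolding f_def using nz by (intro continuous_intros) auto
  next
    fix z :: complex assume "z \<in> frontier (ball 0 1)"
    then have z: "norm z = 1" by simp
    have "poly (tp_slice z2) z = z^n * cnj (poly p2 z + cnj z2 * poly p1 z)"
      using poly_tp1_unit_circle[OF z] poly_tp2_unit_circle[OF z]
      by (simp add: poly_tp_slice algebra_simps)
    then have "norm (poly (tp_slice z2) z) = norm (z^n) * norm (cnj (poly p2 z + cnj z2 * poly p1 z))"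
      by (simp only: norm_mult)
    also have "\<dots> = norm (poly p2 z + cnj z2 * poly p1 z)"
      using z by (simp only: norm_power complex_mod_cnj) simp
    also have "\<dots> \<le> norm (poly (p_slice z2) z)"
      unfolding poly_p_slice using norm_p2_le_p1[of z] z z2 by (intro norm_add_cnj_mult_le) auto
    finally show "norm (f z) \<le> 1"
      unfolding f_def using nz[of z] z by (simp add: norm_divide divide_le_eq)
  qed (use z1 in auto)
  then show ?thesis
    unfolding f_def using nz[of z1] z1 by (simp add: norm_divide divide_le_eq)
qed

lemma norm_Bden_unit_circle:
  assumes z: "norm z = 1"
  shows "norm (poly Bden z) = norm (poly Bnum z)"
proof -
  have aa: "cnj \<alpha> * \<alpha> = 1"
    using alpha_unimodular complex_norm_square[of \<alpha>] by (simp add: mult.commute)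
  have zz: "z^n * cnj z ^ n = 1"
    using z complex_norm_square[of z] by (simp add: power_mult_distrib[symmetric])
  have "z^n * cnj (poly Bden z) = cnj \<alpha> * (z^n * cnj (poly p1 z)) - (z^n * cnj z ^ n) * poly p2 z"
    unfolding Bden_def using poly_tp2_unit_circle[OF z] by (simp add: algebra_simps)
  also have "\<dots> = cnj \<alpha> * poly Bnum z"
    unfolding Bnum_def using poly_tp1_unit_circle[OF z] zz aa by (simp add: algebra_simps)
  finally have "z^n * cnj (poly Bden z) = cnj \<alpha> * poly Bnum z" .
  then have "norm (z^n * cnj (poly Bden z)) = norm (poly Bnum z)"
    using alpha_unimodular by (simp add: norm_mult)
  then show ?thesis using z by (simp add: norm_mult norm_power)
qed

lemma slice_defect_nonzero:
  assumes z2: "norm z2 < 1"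
  shows "smult z2 Bnum - Bden \<noteq> 0"
proof
  assume e: "smult z2 Bnum - Bden = 0"
  have "poly Bnum z = 0" if z: "norm z = 1" for z
  proof -
    have "poly Bden z = z2 * poly Bnum z" using arg_cong[OF e, of "\<lambda>q. poly q z"] by simp
    then have "norm (poly Bnum z) = norm z2 * norm (poly Bnum z)"
      using norm_Bden_unit_circle[OF z] by (simp add: norm_mult)
    then show ?thesis using z2
      by (metis mult_cancel_right1 norm_eq_zero order_less_irrefl)
  qed
  then have "sphere 0 1 \<subseteq> {z. poly Bnum z = 0}" by auto
  then have "Bnum = 0" using infinite_unit_circle poly_roots_finite finite_subset by blast
  moreover from this have "Bden = 0" using e by simp
  ultimately have "tp1 = smult \<alpha> p2" "tp2 = smult \<alpha> p1" by (simp_all add: Bnum_def Bden_def)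
  then have "[:tp2, tp1:] = [:[:\<alpha>:]:] * [:p1, p2:]" by simp
  then have "coprime [:p1, p2:] ([:[:\<alpha>:]:] * [:p1, p2:])" using coprime_pairs by simp
  then have "is_unit [:p1, p2:]" by (simp only: coprime_mult_right_iff coprime_self)
  then have "p2 = 0" by (auto simp: is_unit_poly_iff)
  then show False using tp1_nonzero \<open>tp1 = smult \<alpha> p2\<close> by simp
qed

context
  fixes \<gamma> z2 :: complex and S :: "complex poly"
  assumes \<gamma>: "norm \<gamma> = 1" and z2: "norm z2 < 1"
    and defect: "smult z2 Bnum - Bden = [:-\<gamma>, 1:] * S"
begin

lemma contact_bound:
  assumes S: "S = [:-\<gamma>, 1:]^k * Q" and w: "norm (\<gamma> + w) < 1"
  shows "norm (\<alpha> + w^Suc k * (poly Q (\<gamma> + w) / poly (p_slice z2) (\<gamma> + w))) \<le> 1"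
proof -
  let ?P = "poly (p_slice z2) (\<gamma> + w)"
  have P: "?P \<noteq> 0" using p_slice_nonzero[OF _ z2] w by simp
  have "poly [:-\<gamma>, 1:] (\<gamma> + w) = w" by simp
  then have "poly (tp_slice z2) (\<gamma> + w) = \<alpha> * ?P + w * (w^k * poly Q (\<gamma> + w))"
    unfolding tp_slice_eq defect S by (simp only: poly_add poly_smult poly_mult poly_power)
  then have "poly (tp_slice z2) (\<gamma> + w) = \<alpha> * ?P + w^Suc k * poly Q (\<gamma> + w)"
    by (simp add: mult.assoc)
  then have quotient: "poly (tp_slice z2) (\<gamma> + w) / ?P = \<alpha> + w^Suc k * (poly Q (\<gamma> + w) / ?P)"
    using P by (simp add: add_divide_distrib)
  have "norm (poly (tp_slice z2) (\<gamma> + w) / ?P) \<le> 1"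
    using norm_tp_slice_le[OF w z2] P by (simp add: norm_divide divide_le_eq)
  then show ?thesis unfolding quotient .
qed

lemma contact_sign:
  assumes S: "S = [:-\<gamma>, 1:]^k * Q" and u: "Re u > 0"
  shows "Re (cnj \<alpha> * (-\<gamma>*u)^Suc k * (poly Q \<gamma> / poly (p_slice z2) \<gamma>)) \<le> 0"
proof -
  have "poly (p_slice z2) \<gamma> \<noteq> 0" using p_slice_nonzero[OF _ z2] \<gamma> by simp
  then have "isCont (\<lambda>w. poly Q (\<gamma> + w) / poly (p_slice z2) (\<gamma> + w)) 0"
    by (intro continuous_intros) auto
  from boundary_contact_sign[OF \<gamma> alpha_unimodular this contact_bound[OF S] u]
  show ?thesis by simp
qed

lemma contact_factor_nonzero: "poly S \<gamma> \<noteq> 0"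
proof
  assume S0: "poly S \<gamma> = 0"
  have "S \<noteq> 0" using slice_defect_nonzero[OF z2] defect by auto
  then obtain Q where S: "S = [:-\<gamma>, 1:]^order \<gamma> S * Q" and "\<not> [:-\<gamma>, 1:] dvd Q"
    using order_decomp[of S \<gamma>] by blast
  from \<open>\<not> [:-\<gamma>, 1:] dvd Q\<close> have Q: "poly Q \<gamma> \<noteq> 0" by (simp add: poly_eq_0_iff_dvd)
  have m: "order \<gamma> S \<noteq> 0" using S0 \<open>S \<noteq> 0\<close> order_root by blast
  define A where "A = cnj \<alpha> * (-\<gamma>)^Suc (order \<gamma> S) * (poly Q \<gamma> / poly (p_slice z2) \<gamma>)"
  have "Re (A * u^Suc (order \<gamma> S)) \<le> 0" if "Re u > 0" for u
  proof -
    have eq: "cnj \<alpha> * (-\<gamma>*u)^Suc (order \<gamma> S) * (poly Q \<gamma> / poly (p_slice z2) \<gamma>)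
        = A * u^Suc (order \<gamma> S)"
      unfolding A_def power_mult_distrib by (simp only: mult_ac)
    show ?thesis using contact_sign[OF S that] unfolding eq .
  qed
  moreover have "Suc (order \<gamma> S) \<ge> 2" using m by simp
  ultimately have "A = 0" using zero_if_Re_mult_power_right_half_plane_nonpos by blast
  moreover have "poly (p_slice z2) \<gamma> \<noteq> 0" using p_slice_nonzero[OF _ z2] \<gamma> by simp
  then have "A \<noteq> 0" using Q \<gamma> alpha_unimodular by (auto simp: A_def)
  ultimately show False by simp
qed

lemma contact_factor_real: "Im (cnj \<alpha> * \<gamma> * poly S \<gamma> * cnj (poly (p_slice z2) \<gamma>)) = 0"
proof -
  let ?P = "poly (p_slice z2) \<gamma>"
  define G where "G = cnj \<alpha> * \<gamma> * (poly S \<gamma> / ?P)"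
  have "Re (G * u) \<ge> 0" if "Re u > 0" for u
    using contact_sign[of 0 S, OF _ that] by (simp add: G_def algebra_simps)
  then have "Im G = 0" by (rule real_if_Re_mult_right_half_plane_nonneg)
  moreover have "?P \<noteq> 0" using p_slice_nonzero[OF _ z2] \<gamma> by simp
  then have "cnj \<alpha> * \<gamma> * poly S \<gamma> * cnj ?P = G * of_real ((cmod ?P)\<^sup>2)"
    unfolding complex_norm_square by (simp add: G_def field_simps)
  ultimately show ?thesis by simp
qed

end

text \<open>The key fact: at a common zero \<gamma> on the unit circle of Bnum and Bden the quotient
  (tp - \<alpha> p) / ((w - \<gamma>) p) at w = \<gamma> is a nonzero constant C, independent of z2.\<close>

lemma common_zero_slope:
  assumes \<gamma>: "norm \<gamma> = 1"
    and N1: "Bnum = [:-\<gamma>, 1:] * N1" and D1: "Bden = [:-\<gamma>, 1:] * D1"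
  obtains C where "C \<noteq> 0" "poly N1 \<gamma> = C * poly p2 \<gamma>" "poly D1 \<gamma> = - C * poly p1 \<gamma>"
proof -
  define E where "E = cnj \<alpha> * \<gamma>"
  have slice: "Im (E * (- poly D1 \<gamma> + z2 * poly N1 \<gamma>) * cnj (poly p1 \<gamma> + z2 * poly p2 \<gamma>)) = 0
      \<and> - poly D1 \<gamma> + z2 * poly N1 \<gamma> \<noteq> 0" if z2: "norm z2 < 1" for z2
  proof -
    have defect: "smult z2 Bnum - Bden = [:-\<gamma>, 1:] * (smult z2 N1 - D1)"
      unfolding N1 D1 by (simp only: right_diff_distrib mult_smult_right)
    from contact_factor_real[OF \<gamma> z2 defect] contact_factor_nonzero[OF \<gamma> z2 defect]
    show ?thesis by (simp add: E_def poly_p_slice algebra_simps)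
  qed
  have p1: "poly p1 \<gamma> \<noteq> 0" using p_slice_nonzero[of \<gamma> 0] \<gamma> by (simp add: poly_p_slice)
  have "(E * poly N1 \<gamma>) * poly p1 \<gamma> = (E * - poly D1 \<gamma>) * poly p2 \<gamma>"
    by (rule proportional_if_Im_mult_cnj_zero[OF p1])
      (use slice in \<open>simp add: algebra_simps\<close>)
  moreover have "E \<noteq> 0" using alpha_unimodular \<gamma> by (auto simp: E_def)
  ultimately have NP: "poly N1 \<gamma> * poly p1 \<gamma> = - poly D1 \<gamma> * poly p2 \<gamma>"
    by (metis mult.assoc mult_left_cancel)
  have "poly D1 \<gamma> \<noteq> 0" using slice[of 0] by simp
  then show ?thesis
    using that[of "- poly D1 \<gamma> / poly p1 \<gamma>"] NP p1 by (simp add: field_simps)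
qed

lemma Bnum_no_double_zero_unit_circle:
  assumes \<gamma>: "norm \<gamma> = 1"
  shows "\<not> [:-\<gamma>, 1:]^2 dvd Bnum"
proof
  assume "[:-\<gamma>, 1:]^2 dvd Bnum"
  then obtain K where "Bnum = [:-\<gamma>, 1:]^2 * K" by (auto elim!: dvdE)
  then have N1: "Bnum = [:-\<gamma>, 1:] * ([:-\<gamma>, 1:] * K)" by (simp only: power2_eq_square mult.assoc)
  then have N0: "poly Bnum \<gamma> = 0" by simp
  then have "poly Bden \<gamma> = 0" using norm_Bden_unit_circle[OF \<gamma>] by simp
  then obtain D1 where D1: "Bden = [:-\<gamma>, 1:] * D1" by (auto simp: poly_eq_0_iff_dvd elim!: dvdE)
  obtain C where "C \<noteq> 0" "poly ([:-\<gamma>, 1:] * K) \<gamma> = C * poly p2 \<gamma>"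
    using common_zero_slope[OF \<gamma> N1 D1] .
  then have p2: "poly p2 \<gamma> = 0" by simp
  then have "poly tp1 \<gamma> = 0" using N0 by (simp add: Bnum_def)
  then have "poly p1 \<gamma> = 0" using poly_tp1_unit_circle[OF \<gamma>] \<gamma> by auto
  then show False using no_common_root_unit_circle[OF \<gamma> _ p2] by blast
qed

lemma cnj_Bal_at_zero:
  assumes \<tau>: "norm \<tau> = 1" and lam: "norm lam = 1" and zero: "poly (p_slice lam) \<tau> = 0"
  shows "cnj (Bal p1 p2 tp1 tp2 \<alpha> \<tau>) = lam"
proof -
  have ll: "lam * cnj lam = 1" using lam complex_norm_square[of lam] by simp
  have l0: "lam \<noteq> 0" using lam by auto
  have p1: "poly p1 \<tau> = - lam * poly p2 \<tau>" using zero by (simp add: poly_p_slice eq_neg_iff_add_eq_0)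
  have p2: "poly p2 \<tau> \<noteq> 0" using no_common_root_unit_circle[OF \<tau>] p1 by auto
  have "lam * poly Bnum \<tau> = lam * (\<tau>^n * cnj (poly p1 \<tau>)) - lam * \<alpha> * poly p2 \<tau>"
    by (simp add: Bnum_def poly_tp1_unit_circle[OF \<tau>] algebra_simps)
  also have "\<dots> = - (lam * cnj lam) * \<tau>^n * cnj (poly p2 \<tau>) - lam * \<alpha> * poly p2 \<tau>"
    by (simp add: p1 algebra_simps)
  also have "\<dots> = poly Bden \<tau>" using ll p1 by (simp add: Bden_def poly_tp2_unit_circle[OF \<tau>] algebra_simps)
  finally have DN: "poly Bden \<tau> = lam * poly Bnum \<tau>" by simp
  have "Bnum \<noteq> 0" using Bnum_no_double_zero_unit_circle[OF \<tau>] by auto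
  have "Bal p1 p2 tp1 tp2 \<alpha> \<tau> = 1 / lam"
  proof (cases "poly Bnum \<tau> = 0")
    case False
    show ?thesis unfolding Bal_eq
      by (rule poly_div_gcd_quotient[OF _ \<open>Bnum \<noteq> 0\<close> False DN l0]) (simp add: mult.commute)
  next
    case True
    then obtain N1 where N1: "Bnum = [:-\<tau>, 1:] * N1" by (auto simp: poly_eq_0_iff_dvd elim!: dvdE)
    from True DN obtain D1 where D1: "Bden = [:-\<tau>, 1:] * D1"
      by (auto simp: poly_eq_0_iff_dvd elim!: dvdE)
    obtain C where C: "C \<noteq> 0" "poly N1 \<tau> = C * poly p2 \<tau>" "poly D1 \<tau> = - C * poly p1 \<tau>"
      using common_zero_slope[OF \<tau> N1 D1] .
    have "poly N1 \<tau> \<noteq> 0" using C p2 by simp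
    moreover have "poly D1 \<tau> = lam * poly N1 \<tau>" using C p1 by simp
    ultimately show ?thesis unfolding Bal_eq
      by (intro poly_div_gcd_quotient[OF _ \<open>Bnum \<noteq> 0\<close> _ _ l0]) (simp_all add: N1 D1 algebra_simps)
  qed
  then show ?thesis using ll l0 by (simp add: divide_eq_eq mult.commute)
qed

lemma slice_derivative_at_zero:
  assumes \<tau>: "norm \<tau> = 1" and zero: "poly (p_slice lam) \<tau> = 0"
    and on_line: "\<And>z2. norm z2 = 1 \<Longrightarrow> poly (tp_slice z2) \<tau> = \<alpha> * poly (p_slice z2) \<tau>"
  obtains C where "C \<noteq> 0" "\<And>z2. z2 \<noteq> lam \<Longrightarrow>
    ((\<lambda>w. poly (tp_slice z2) w / poly (p_slice z2) w) has_field_derivative C) (at \<tau>)"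
proof -
  have p1: "poly p1 \<tau> = - lam * poly p2 \<tau>" using zero by (simp add: poly_p_slice eq_neg_iff_add_eq_0)
  have p2: "poly p2 \<tau> \<noteq> 0" using no_common_root_unit_circle[OF \<tau>] p1 by auto
  have "- poly Bden \<tau> + z2 * poly Bnum \<tau> = 0" if "norm z2 = 1" for z2
    using on_line[OF that] tp_slice_eq[of z2] by (simp add: algebra_simps)
  from this[of 1] this[of "-1"] have "poly Bnum \<tau> = 0" "poly Bden \<tau> = 0" by simp_all
  then obtain N1 D1 where N1: "Bnum = [:-\<tau>, 1:] * N1" and D1: "Bden = [:-\<tau>, 1:] * D1"
    by (auto simp: poly_eq_0_iff_dvd elim!: dvdE)
  obtain C where C: "C \<noteq> 0" "poly N1 \<tau> = C * poly p2 \<tau>" "poly D1 \<tau> = - C * poly p1 \<tau>"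
    using common_zero_slope[OF \<tau> N1 D1] .
  have "((\<lambda>w. poly (tp_slice z2) w / poly (p_slice z2) w) has_field_derivative C) (at \<tau>)"
    if "z2 \<noteq> lam" for z2
  proof -
    define P where "P = p_slice z2"
    define S where "S = smult z2 N1 - D1"
    have P\<tau>: "poly P \<tau> \<noteq> 0" using p1 p2 that by (simp add: P_def poly_p_slice algebra_simps)
    have S\<tau>: "poly S \<tau> = C * poly P \<tau>" using C by (simp add: S_def P_def poly_p_slice algebra_simps)
    have T: "poly (tp_slice z2) w = \<alpha> * poly P w + (w - \<tau>) * poly S w" for w
      by (simp add: tp_slice_eq P_def S_def N1 D1 algebra_simps)
    have "((\<lambda>w. (\<alpha> * poly P w + (w - \<tau>) * poly S w) / poly P w) has_field_derivative
        ((\<alpha> * poly (pderiv P) \<tau> + (1 * poly S \<tau> + poly (pderiv S) \<tau> * (\<tau> - \<tau>))) * poly P \<tau>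
          - (\<alpha> * poly P \<tau> + (\<tau> - \<tau>) * poly S \<tau>) * poly (pderiv P) \<tau>) / (poly P \<tau> * poly P \<tau>))
        (at \<tau>)"
      by (intro derivative_eq_intros poly_DERIV P\<tau>) auto
    then show ?thesis using P\<tau> S\<tau> by (simp add: T P_def field_simps)
  qed
  with C(1) show ?thesis using that by blast
qed

end

theorem lemma3p5:
  fixes n :: nat and p1 p2 :: "complex poly" and \<alpha> :: complex
  defines "tp1 \<equiv> refl_poly n p1" and "tp2 \<equiv> refl_poly n p2"
  defines "p \<equiv> eval2 p1 p2" and "tp \<equiv> eval2 tp2 tp1"
  defines "\<phi> \<equiv> (\<lambda>z1 z2. tp z1 z2 / p z1 z2)"
  assumes n: "n \<ge> 1"
    and deg1: "degree p1 \<le> n" and deg2: "degree p2 \<le> n"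
    and nozero: "\<And>z1 z2. norm z1 < 1 \<Longrightarrow> norm z2 < 1 \<Longrightarrow> p z1 z2 \<noteq> 0"
    and tdeg: "tp1 \<noteq> 0" "max (degree tp1) (degree tp2) = n"
    and cop: "coprime [:p1, p2:] [:tp2, tp1:]"
    and alpha: "norm \<alpha> = 1"
  shows "(\<forall>\<gamma>. norm \<gamma> = 1 \<longrightarrow>
            \<not> ([:[:-\<gamma>, 1:]^2:] dvd [:tp2 - smult \<alpha> p1, tp1 - smult \<alpha> p2:]) \<and>
            \<not> ([:-\<gamma>, 1:]^2 dvd (tp1 - smult \<alpha> p2)))
       \<and> (\<forall>\<tau> lam. norm \<tau> = 1 \<and> norm lam = 1 \<and> p \<tau> lam = 0 \<longrightarrow>
            cnj (Bal p1 p2 tp1 tp2 \<alpha> \<tau>) = lam)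
       \<and> (\<forall>\<tau> lam. norm \<tau> = 1 \<and> norm lam = 1 \<and> p \<tau> lam = 0 \<and>
              (\<forall>z2. norm z2 = 1 \<longrightarrow> tp \<tau> z2 = \<alpha> * p \<tau> z2) \<longrightarrow>
            (\<exists>C. C \<noteq> 0 \<and> (\<forall>z2. norm z2 \<le> 1 \<and> z2 \<noteq> lam \<longrightarrow>
                 ((\<lambda>w. \<phi> w z2) has_field_derivative C) (at \<tau>))))"
  proof -
  interpret rational_inner_n1 n p1 p2 tp1 tp2 \<alpha>
    using deg1 deg2 nozero tdeg(1) cop alpha
    by unfold_locales (simp_all add: tp1_def tp2_def p_def eval2_def)
  have p_eq: "p z1 z2 = poly (p_slice z2) z1" for z1 z2
    by (simp add: p_def eval2_def poly_p_slice)
  have tp_eq: "tp z1 z2 = poly (tp_slice z2) z1" for z1 z2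
    by (simp add: tp_def eval2_def poly_tp_slice)
  have i: "\<not> [:-\<gamma>, 1:]^2 dvd (tp1 - smult \<alpha> p2)" if "norm \<gamma> = 1" for \<gamma>
    using Bnum_no_double_zero_unit_circle[OF that] by (simp add: Bnum_def)
  have i': "\<not> [:[:-\<gamma>, 1:]^2:] dvd [:tp2 - smult \<alpha> p1, tp1 - smult \<alpha> p2:]"
    if "norm \<gamma> = 1" for \<gamma>
  proof
    assume "[:[:-\<gamma>, 1:]^2:] dvd [:tp2 - smult \<alpha> p1, tp1 - smult \<alpha> p2:]"
    then have "[:-\<gamma>, 1:]^2 dvd coeff [:tp2 - smult \<alpha> p1, tp1 - smult \<alpha> p2:] 1"
      unfolding const_poly_dvd_iff by blast
    with i[OF that] show False by simp
  qed
  have ii: "cnj (Bal p1 p2 tp1 tp2 \<alpha> \<tau>) = lam" if "norm \<tau> = 1" "norm lam = 1" "p \<tau> lam = 0" for \<tau> lam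
    using cnj_Bal_at_zero that by (simp add: p_eq)
  have iii: "\<exists>C. C \<noteq> 0 \<and> (\<forall>z2. norm z2 \<le> 1 \<and> z2 \<noteq> lam \<longrightarrow>
      ((\<lambda>w. \<phi> w z2) has_field_derivative C) (at \<tau>))"
    if \<tau>: "norm \<tau> = 1" and zero: "p \<tau> lam = 0"
      and on_line: "\<forall>z2. norm z2 = 1 \<longrightarrow> tp \<tau> z2 = \<alpha> * p \<tau> z2" for \<tau> lam
  proof -
    obtain C where "C \<noteq> 0"
      "\<And>z2. z2 \<noteq> lam \<Longrightarrow> ((\<lambda>w. poly (tp_slice z2) w / poly (p_slice z2) w) has_field_derivative C) (at \<tau>)"
      by (rule slice_derivative_at_zero[of \<tau> lam]) (use \<tau> zero on_line in \<open>simp_all add: p_eq tp_eq\<close>)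
    then show ?thesis unfolding \<phi>_def p_eq tp_eq by blast
  qed
  show ?thesis
    using i i' ii iii by (intro conjI allI impI) auto
qed

end
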